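(* Let $X \in \mathbb{R}^{n\times p}$, let $I \subset \{1,\ldots,p\}$ be an index set with complement $I^c = \{1,\ldots,p\}\setminus I$, and suppose $W \in \mathbb{R}^{p\times p}$ satisfies $W_{I^c} = 0$ (i.e., every row of $W$ with index in $I^c$ is zero). Then $$\|X - X W W^{+}\|_F > \|X - X^{I} (X^{I})^{+} X\|_F,$$ unless $\mathcal{L}_{\mathrm{col}}(X^{I}) \perp \mathcal{L}_{\mathrm{col}}(X^{I^c})$, in which case $\|X - X W W^{+}\|_F \ge \|X - X^{I} (X^{I})^{+} X\|_F$ holds.
   Context: For a matrix $A$ and an index set $J$, $A_{J}$ denotes the submatrix of $A$ consisting of the rows indexed by $J$, and $A^{J}$ denotes the submatrix consisting of the columns indexed by $J$. $A^{+}$ denotes the Moore–Penrose pseudoinverse of $A$, $\|\cdot\|_F$ the Frobenius norm, and $\mathcal{L}_{\mathrm{col}}(A)$ the column space of $A$. Two subspaces are written $\perp$ when they are orthogonal. *)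

theory Defs
  imports "Jordan_Normal_Form.DL_Submatrix"
begin

text \<open>Moore-Penrose pseudoinverse, defined by the four Penrose conditions
  (it exists and is unique for every real matrix).\<close>
definition pinv :: "real mat \<Rightarrow> real mat" where
  "pinv A = (THE B. B \<in> carrier_mat (dim_col A) (dim_row A) \<and>
      A * B * A = A \<and> B * A * B = B \<and>
      transpose_mat (A * B) = A * B \<and> transpose_mat (B * A) = B * A)"

definition frob_norm :: "real mat \<Rightarrow> real" where
  "frob_norm A = sqrt (\<Sum>i<dim_row A. \<Sum>j<dim_col A. (A $$ (i,j))^2)"

definition col_space :: "real mat \<Rightarrow> real vec set" where
  "col_space A = {A *\<^sub>v x | x. x \<in> carrier_vec (dim_col A)}"

definition orth_subspaces :: "real vec set \<Rightarrow> real vec set \<Rightarrow> bool" where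
  "orth_subspaces S T \<longleftrightarrow> (\<forall>u\<in>S. \<forall>v\<in>T. u \<bullet> v = 0)"

text \<open>Column submatrix X^J (columns indexed by J, in increasing order).\<close>
definition cols_sub :: "real mat \<Rightarrow> nat set \<Rightarrow> real mat" where
  "cols_sub A J = submatrix A UNIV J"

end

theory Submission
  imports Defs
begin

text \<open>Let \<open>P = X\<^sup>I (X\<^sup>I)\<^sup>+\<close> be the orthogonal projector onto the column space of \<open>X\<^sup>I\<close> and
  \<open>Y = X W W\<^sup>+\<close>. Since the rows of \<open>W\<close> outside \<open>I\<close> vanish, \<open>X W\<close> only depends on the
  columns \<open>X\<^sup>I\<close>, which \<open>P\<close> fixes; hence \<open>P Y = Y\<close>. Splitting \<open>X - Y = (X - P X) + (P X - Y)\<close>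
  into a part orthogonal to and a part inside the range of \<open>P\<close> gives
  \<open>\<parallel>X - Y\<parallel>\<^sup>2 = \<parallel>X - P X\<parallel>\<^sup>2 + \<parallel>P X - Y\<parallel>\<^sup>2\<close>. Equality of the two norms forces \<open>P X = Y\<close>. As
  \<open>W W\<^sup>+\<close> is symmetric, its columns outside \<open>I\<close> vanish as well, so then \<open>P X\<^sup>I\<^sup>c = 0\<close>, i.e. the
  columns of \<open>X\<^sup>I\<^sup>c\<close> are orthogonal to the range of \<open>P\<close>.

  Since \<open>pinv\<close> is defined through the Penrose conditions, their solvability is needed first. A
  generalised inverse \<open>B\<close> with \<open>A B A = A\<close> and \<open>A B\<close> symmetric comes from building the
  projector \<open>A B\<close> onto the column space one column at a time, each column adding the rank-one
  projector onto its residual; for such \<open>B\<close> and the transpose \<open>D\<close> of one for \<open>A\<^sup>T\<close>, the matrix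
  \<open>D A B\<close> satisfies all four conditions.\<close>

definition outer_prod :: "'a :: comm_ring_1 vec \<Rightarrow> 'a vec \<Rightarrow> 'a mat" where
  "outer_prod u v = mat (dim_vec u) (dim_vec v) (\<lambda>(i,j). u $ i * v $ j)"

lemma outer_prod_carrier [simp]:
  "u \<in> carrier_vec m \<Longrightarrow> v \<in> carrier_vec n \<Longrightarrow> outer_prod u v \<in> carrier_mat m n"
  unfolding outer_prod_def by auto

lemma index_outer_prod [simp]:
  "i < dim_vec u \<Longrightarrow> j < dim_vec v \<Longrightarrow> outer_prod u v $$ (i,j) = u $ i * v $ j"
  "dim_row (outer_prod u v) = dim_vec u" "dim_col (outer_prod u v) = dim_vec v"
  unfolding outer_prod_def by auto

lemma transpose_outer_prod: "transpose_mat (outer_prod u v) = outer_prod v u"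
  by (rule eq_matI) auto

lemma outer_prod_zero_left: "outer_prod (0\<^sub>v m) v = 0\<^sub>m m (dim_vec v)"
  by (rule eq_matI) auto

lemma outer_prod_zero_right: "outer_prod u (0\<^sub>v n) = 0\<^sub>m (dim_vec u) n"
  by (rule eq_matI) auto

lemma outer_prod_mult_vec:
  assumes "v \<in> carrier_vec n" and "w \<in> carrier_vec n"
  shows "outer_prod u v *\<^sub>v w = (v \<bullet> w) \<cdot>\<^sub>v u"
  using assms
  by (intro eq_vecI) (auto simp: scalar_prod_def sum_distrib_left ac_simps intro!: sum.cong)

lemma mult_outer_prod_left:
  assumes A: "A \<in> carrier_mat m n" and u: "u \<in> carrier_vec n"
  shows "A * outer_prod u v = outer_prod (A *\<^sub>v u) v"
proof (rule eq_matI)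
  fix i j assume i: "i < dim_row (outer_prod (A *\<^sub>v u) v)" and j: "j < dim_col (outer_prod (A *\<^sub>v u) v)"
  have "(A * outer_prod u v) $$ (i,j) = (\<Sum>k<n. A $$ (i,k) * (u $ k * v $ j))"
    using i j A u by (auto intro!: sum.cong simp: scalar_prod_def lessThan_atLeast0)
  also have "\<dots> = (row A i \<bullet> u) * v $ j"
    using i j A u unfolding scalar_prod_def
    by (auto simp: sum_distrib_left lessThan_atLeast0 ac_simps intro!: sum.cong)
  finally show "(A * outer_prod u v) $$ (i,j) = outer_prod (A *\<^sub>v u) v $$ (i,j)"
    using i j A by auto
qed (use A in auto)

lemma mult_outer_prod_right:
  assumes A: "A \<in> carrier_mat n m" and v: "v \<in> carrier_vec n"
  shows "outer_prod u v * A = outer_prod u (transpose_mat A *\<^sub>v v)"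
proof (rule eq_matI)
  fix i j assume i: "i < dim_row (outer_prod u (transpose_mat A *\<^sub>v v))"
    and j: "j < dim_col (outer_prod u (transpose_mat A *\<^sub>v v))"
  have "(outer_prod u v * A) $$ (i,j) = (\<Sum>k<n. (u $ i * v $ k) * A $$ (k,j))"
    using i j A v by (auto intro!: sum.cong simp: scalar_prod_def lessThan_atLeast0)
  also have "\<dots> = u $ i * (col A j \<bullet> v)"
    using i j A v unfolding scalar_prod_def
    by (auto simp: sum_distrib_left lessThan_atLeast0 ac_simps intro!: sum.cong)
  finally show "(outer_prod u v * A) $$ (i,j) = outer_prod u (transpose_mat A *\<^sub>v v) $$ (i,j)"
    using i j A by auto
qed (use A v in auto)

lemma outer_prod_mult_outer_prod:
  assumes v: "v \<in> carrier_vec n" and x: "x \<in> carrier_vec n" and y: "y \<in> carrier_vec k"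
  shows "outer_prod u v * outer_prod x y = (v \<bullet> x) \<cdot>\<^sub>m outer_prod u y"
proof -
  have "outer_prod u v * outer_prod x y = outer_prod u ((x \<bullet> v) \<cdot>\<^sub>v y)"
    using mult_outer_prod_right[OF outer_prod_carrier[OF x y] v]
    by (simp add: transpose_outer_prod outer_prod_mult_vec[OF x v])
  then show ?thesis
    using comm_scalar_prod[OF v x] by (auto intro!: eq_matI)
qed

lemma mult_unit_vec_eq_col:
  fixes A :: "'a :: semiring_1 mat"
  assumes A: "A \<in> carrier_mat m n" and k: "k < n"
  shows "A *\<^sub>v unit_vec n k = col A k"
  using A k by (intro eq_vecI) auto

lemma smult_mat_mult_mat_vec:
  fixes A :: "'a :: comm_semiring_0 mat"
  assumes "A \<in> carrier_mat nr nc" and "v \<in> carrier_vec nc"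
  shows "(k \<cdot>\<^sub>m A) *\<^sub>v v = k \<cdot>\<^sub>v (A *\<^sub>v v)"
  using assms by (intro eq_vecI) (auto simp: scalar_prod_def sum_distrib_left ac_simps)

definition orth_proj :: "real mat \<Rightarrow> bool" where
  "orth_proj P \<longleftrightarrow> transpose_mat P = P \<and> P * P = P"

lemma orth_proj_add_rank_one:
  fixes P :: "real mat"
  assumes P: "P \<in> carrier_mat m m" "orth_proj P"
    and c: "c \<in> carrier_vec m" "P *\<^sub>v c = 0\<^sub>v m"
  shows "orth_proj (P + (1 / (c \<bullet> c)) \<cdot>\<^sub>m outer_prod c c)"
proof -
  define s where "s = c \<bullet> c"
  define S where "S = (1 / s) \<cdot>\<^sub>m outer_prod c c"
  have S: "S \<in> carrier_mat m m" unfolding S_def using c by auto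
  have P_sym: "transpose_mat P = P" and P_idem: "P * P = P"
    using P(2) unfolding orth_proj_def by auto
  have S_sym: "transpose_mat S = S"
    unfolding S_def by (rule eq_matI) auto
  have PS: "P * S = 0\<^sub>m m m"
    using mult_smult_distrib[OF P(1) outer_prod_carrier[OF c(1) c(1)]] mult_outer_prod_left[OF P(1) c(1)]
      c outer_prod_zero_left[of m c]
    unfolding S_def by simp
  have SP: "S * P = 0\<^sub>m m m"
    using mult_smult_assoc_mat[OF outer_prod_carrier[OF c(1) c(1)] P(1)] mult_outer_prod_right[OF P(1) c(1)]
      c P_sym outer_prod_zero_right[of c m]
    unfolding S_def by simp
  have SS: "S * S = S"
  proof -
    have O: "outer_prod c c \<in> carrier_mat m m" using c by simp
    have "S * S = (1 / s) \<cdot>\<^sub>m (outer_prod c c * S)"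
      using mult_smult_assoc_mat[OF O S, of "1 / s"] unfolding S_def[symmetric] .
    also have "outer_prod c c * S = (1 / s) \<cdot>\<^sub>m (outer_prod c c * outer_prod c c)"
      unfolding S_def by (rule mult_smult_distrib[OF O O])
    also have "outer_prod c c * outer_prod c c = s \<cdot>\<^sub>m outer_prod c c"
      unfolding s_def by (rule outer_prod_mult_outer_prod[OF c(1) c(1) c(1)])
    also have "(1 / s) \<cdot>\<^sub>m ((1 / s) \<cdot>\<^sub>m (s \<cdot>\<^sub>m outer_prod c c)) = S"
      unfolding S_def by (cases "s = 0") (auto intro!: eq_matI simp: field_simps)
    finally show ?thesis .
  qed
  have "(P + S) * (P + S) = P * (P + S) + S * (P + S)"
    by (rule add_mult_distrib_mat[OF P(1) S add_carrier_mat[OF S]])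
  also have "\<dots> = P * P + P * S + (S * P + S * S)"
    using mult_add_distrib_mat[OF P(1) P(1) S] mult_add_distrib_mat[OF S P(1) S] by simp
  also have "\<dots> = P + S"
    using P_idem PS SP SS P(1) S by simp
  finally show ?thesis
    unfolding orth_proj_def S_def[symmetric] s_def[symmetric]
    using transpose_add[OF P(1) S] P_sym S_sym by simp
qed

lemma add_rank_one_mult_vec:
  fixes P :: "'a :: comm_ring_1 mat"
  assumes P: "P \<in> carrier_mat m m" and c: "c \<in> carrier_vec m" and w: "w \<in> carrier_vec m"
  shows "(P + k \<cdot>\<^sub>m outer_prod c c) *\<^sub>v w = P *\<^sub>v w + (k * (c \<bullet> w)) \<cdot>\<^sub>v c"
proof -
  have "(P + k \<cdot>\<^sub>m outer_prod c c) *\<^sub>v w = P *\<^sub>v w + k \<cdot>\<^sub>v (outer_prod c c *\<^sub>v w)"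
    using add_mult_distrib_mat_vec[OF P _ w, of "k \<cdot>\<^sub>m outer_prod c c"] c
    by (simp add: smult_mat_mult_mat_vec[OF outer_prod_carrier[OF c c] w])
  then show ?thesis by (simp add: outer_prod_mult_vec[OF c w] smult_smult_assoc)
qed

lemma orth_proj_residual:
  fixes P :: "real mat"
  assumes P: "P \<in> carrier_mat m m" "orth_proj P" and a: "a \<in> carrier_vec m"
  defines "c \<equiv> a - P *\<^sub>v a"
  shows "P *\<^sub>v c = 0\<^sub>v m" and "\<And>w. w \<in> carrier_vec m \<Longrightarrow> c \<bullet> (P *\<^sub>v w) = 0"
    and "c \<bullet> a = c \<bullet> c"
proof -
  have P_sym: "transpose_mat P = P" and P_idem: "P * P = P"
    using P(2) unfolding orth_proj_def by auto
  have c: "c \<in> carrier_vec m" unfolding c_def using a P by simp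
  have "P *\<^sub>v (P *\<^sub>v a) = P *\<^sub>v a" using assoc_mult_mat_vec[OF P(1) P(1) a] P_idem by simp
  then show Pc: "P *\<^sub>v c = 0\<^sub>v m"
    unfolding c_def using mult_minus_distrib_mat_vec[OF P(1) a, of "P *\<^sub>v a"] P a by auto
  show c_orth: "c \<bullet> (P *\<^sub>v w) = 0" if w: "w \<in> carrier_vec m" for w
    using transpose_vec_mult_scalar[OF P(1) w c] P_sym Pc w by simp
  have a_split: "a = c + P *\<^sub>v a" unfolding c_def using a P by (intro eq_vecI) auto
  show "c \<bullet> a = c \<bullet> c"
    using arg_cong[OF a_split, of "\<lambda>x. c \<bullet> x"] scalar_prod_add_distrib[OF c c, of "P *\<^sub>v a"]
      c_orth[OF a] P a by simp
qed

text \<open>The residual \<open>c\<close> of column \<open>k\<close> is \<open>A u\<close> for \<open>u = e\<^sub>k - B a\<close>, so adding the rank-one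
  projector onto \<open>c\<close> keeps the projector of the form \<open>A B'\<close>.\<close>

lemma orth_proj_onto_cols_step:
  fixes A B :: "real mat"
  assumes A: "A \<in> carrier_mat m n" and k: "k < n" and B: "B \<in> carrier_mat n m"
    and proj: "orth_proj (A * B)" and fix_cols: "\<forall>j<k. (A * B) *\<^sub>v col A j = col A j"
  shows "\<exists>B'\<in>carrier_mat n m. orth_proj (A * B') \<and> (\<forall>j<Suc k. (A * B') *\<^sub>v col A j = col A j)"
proof -
  define P where "P = A * B"
  define a where "a = col A k"
  define c where "c = a - P *\<^sub>v a"
  have P: "P \<in> carrier_mat m m" and P_proj: "orth_proj P" using A B proj unfolding P_def by auto
  have a: "a \<in> carrier_vec m" unfolding a_def using A k by simp
  have c: "c \<in> carrier_vec m" unfolding c_def using a P by simp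
  note residual = orth_proj_residual[OF P P_proj a, folded c_def]
  have a_split: "P *\<^sub>v a + c = a" unfolding c_def using a P by (intro eq_vecI) auto
  show ?thesis
  proof (cases "c = 0\<^sub>v m")
    case True
    then have "P *\<^sub>v a = a" using a_split a P by simp
    then show ?thesis
      using B proj fix_cols unfolding P_def a_def by (auto simp: less_Suc_eq)
  next
    case False
    define s where "s = c \<bullet> c"
    have s: "s > 0"
      using conjugate_square_greater_0_vec[OF c] False unfolding s_def by simp
    define u where "u = unit_vec n k - B *\<^sub>v a"
    have u: "u \<in> carrier_vec n" unfolding u_def using B a by simp
    have Au: "A *\<^sub>v u = c"
      using mult_minus_distrib_mat_vec[OF A _ mult_mat_vec_carrier[OF B a], of "unit_vec n k"]
        mult_unit_vec_eq_col[OF A k] assoc_mult_mat_vec[OF A B a]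
      unfolding u_def c_def a_def P_def by simp
    define B' where "B' = B + (1 / s) \<cdot>\<^sub>m outer_prod u c"
    have B': "B' \<in> carrier_mat n m" unfolding B'_def using B u c by simp
    have AB': "A * B' = P + (1 / s) \<cdot>\<^sub>m outer_prod c c"
      using mult_add_distrib_mat[OF A B, of "(1 / s) \<cdot>\<^sub>m outer_prod u c"]
        mult_smult_distrib[OF A outer_prod_carrier[OF u c]] mult_outer_prod_left[OF A u] Au u c
      unfolding B'_def P_def by simp
    have "(A * B') *\<^sub>v col A j = col A j" if j: "j < Suc k" for j
    proof -
      have "j < n" using j k by simp
      then have cj: "col A j \<in> carrier_vec m" using A by (rule col_carrier_vec)
      have "(A * B') *\<^sub>v col A j = P *\<^sub>v col A j + (1 / s * (c \<bullet> col A j)) \<cdot>\<^sub>v c"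
        unfolding AB' by (rule add_rank_one_mult_vec[OF P c cj])
      also have "\<dots> = col A j"
      proof (cases "j < k")
        case True
        have fixed: "P *\<^sub>v col A j = col A j" using fix_cols True unfolding P_def by simp
        have "c \<bullet> col A j = 0" using residual(2)[OF cj] unfolding fixed .
        then show ?thesis using fixed cj c A by (auto intro!: eq_vecI)
      next
        case False
        then have "j = k" using j by simp
        then have "col A j = a" unfolding a_def by simp
        moreover have "1 / s * (c \<bullet> a) = 1" using residual(3) s unfolding s_def by simp
        ultimately show ?thesis using a_split by simp
      qed
      finally show ?thesis .
    qed
    moreover have "orth_proj (A * B')"
      unfolding AB' s_def by (rule orth_proj_add_rank_one[OF P P_proj c residual(1)])
    ultimately show ?thesis using B' by blast
  qed
qed

lemma orth_proj_onto_cols_exists: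
  fixes A :: "real mat"
  assumes A: "A \<in> carrier_mat m n"
  shows "k \<le> n \<Longrightarrow> \<exists>B\<in>carrier_mat n m. orth_proj (A * B) \<and> (\<forall>j<k. (A * B) *\<^sub>v col A j = col A j)"
proof (induction k)
  case 0
  have "orth_proj (A * 0\<^sub>m n m)"
    using A unfolding orth_proj_def by (auto intro!: eq_matI)
  then show ?case by auto
next
  case (Suc k)
  then show ?case using orth_proj_onto_cols_step[OF A] by auto
qed

lemma least_squares_ginverse_exists:
  fixes A :: "real mat"
  assumes A: "A \<in> carrier_mat m n"
  shows "\<exists>B\<in>carrier_mat n m. A * B * A = A \<and> transpose_mat (A * B) = A * B"
proof -
  obtain B where B: "B \<in> carrier_mat n m" and proj: "orth_proj (A * B)"
    and fix_cols: "\<forall>j<n. (A * B) *\<^sub>v col A j = col A j"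
    using orth_proj_onto_cols_exists[OF A order_refl] by blast
  have "col (A * B * A) j = col A j" if "j < n" for j
  proof -
    have "col (A * B * A) j = (A * B) *\<^sub>v col A j" using A B that by (intro col_mult2) auto
    also have "\<dots> = col A j" using fix_cols that by blast
    finally show ?thesis .
  qed
  then have "A * B * A = A"
    using A B by (intro mat_col_eqI) auto
  then show ?thesis using B proj unfolding orth_proj_def by blast
qed

definition penrose :: "real mat \<Rightarrow> real mat \<Rightarrow> bool" where
  "penrose A G \<longleftrightarrow> A * G * A = A \<and> G * A * G = G \<and>
     transpose_mat (A * G) = A * G \<and> transpose_mat (G * A) = G * A"

lemma mult_mat_assoc_dims:
  fixes A B C :: "'a :: semiring_0 mat"
  assumes "dim_col A = dim_row B" "dim_col B = dim_row C"
  shows "A * B * C = A * (B * C)"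
  using assoc_mult_mat[OF carrier_matI[OF refl refl] carrier_matI[OF assms(1)[symmetric] refl]
      carrier_matI[OF assms(2)[symmetric] refl]] .

lemma penrose_exists:
  fixes A :: "real mat"
  assumes A: "A \<in> carrier_mat m n"
  shows "\<exists>G\<in>carrier_mat n m. penrose A G"
proof -
  obtain B where B: "B \<in> carrier_mat n m" and ABA: "A * B * A = A"
    and AB_sym: "transpose_mat (A * B) = A * B"
    using least_squares_ginverse_exists[OF A] by blast
  obtain C where C: "C \<in> carrier_mat m n"
    and ACA: "transpose_mat A * C * transpose_mat A = transpose_mat A"
    and AC_sym: "transpose_mat (transpose_mat A * C) = transpose_mat A * C"
    using least_squares_ginverse_exists[of "transpose_mat A"] A by auto
  define D where "D = transpose_mat C"
  have dims: "dim_row A = m" "dim_col A = n" "dim_row B = n" "dim_col B = m"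
    "dim_row D = n" "dim_col D = m" using A B C unfolding D_def by auto
  have DA: "D * A = transpose_mat A * C"
    using AC_sym transpose_mult[of "transpose_mat A" n m C n] A C unfolding D_def by simp
  have DA_sym: "transpose_mat (D * A) = D * A" using DA AC_sym by simp
  have ADA: "A * D * A = A"
  proof -
    have "transpose_mat (transpose_mat A * C * transpose_mat A) = A * (D * A)"
      using transpose_mult[of "transpose_mat A * C" n n "transpose_mat A" m] A C DA DA_sym by simp
    then show ?thesis using ACA dims by (simp add: mult_mat_assoc_dims)
  qed
  define G where "G = D * A * B"
  have AG: "A * G = A * B"
  proof -
    have "A * G = A * D * A * B" unfolding G_def using dims by (simp add: mult_mat_assoc_dims)
    then show ?thesis by (simp only: ADA)
  qed
  have GA: "G * A = D * A"
  proof -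
    have "G * A = D * (A * B * A)" unfolding G_def using dims by (simp add: mult_mat_assoc_dims)
    then show ?thesis by (simp only: ABA)
  qed
  have "G * A * G = G"
  proof -
    have "G * A * G = D * A * G" by (simp only: GA)
    also have "\<dots> = D * (A * D * A) * B" unfolding G_def using dims by (simp add: mult_mat_assoc_dims)
    finally show ?thesis unfolding ADA G_def .
  qed
  moreover have "A * G * A = A" unfolding AG by (rule ABA)
  moreover have "transpose_mat (A * G) = A * G" unfolding AG by (rule AB_sym)
  moreover have "transpose_mat (G * A) = G * A" unfolding GA by (rule DA_sym)
  moreover have "G \<in> carrier_mat n m" unfolding G_def using A B dims by auto
  ultimately show ?thesis unfolding penrose_def by blast
qed

lemma penrose_transpose:
  fixes A G :: "real mat"
  assumes A: "A \<in> carrier_mat m n" and G: "G \<in> carrier_mat n m" and pen: "penrose A G"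
  shows "penrose (transpose_mat A) (transpose_mat G)"
proof -
  have t: "transpose_mat (M * N) = transpose_mat N * transpose_mat M" if "dim_col M = dim_row N"
    for M N :: "real mat"
    using transpose_mult[OF carrier_matI[OF refl refl] carrier_matI[OF that[symmetric] refl]] .
  have AGA: "transpose_mat A * transpose_mat G * transpose_mat A = transpose_mat (A * G * A)"
    and GAG: "transpose_mat G * transpose_mat A * transpose_mat G = transpose_mat (G * A * G)"
    using A G by (simp_all add: t mult_mat_assoc_dims)
  have AG: "transpose_mat A * transpose_mat G = G * A" and GA: "transpose_mat G * transpose_mat A = A * G"
    using A G pen unfolding penrose_def by (simp_all add: t[symmetric])
  show ?thesis
    unfolding penrose_def
  proof (intro conjI)
    show "transpose_mat A * transpose_mat G * transpose_mat A = transpose_mat A"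
      unfolding AGA using pen unfolding penrose_def by simp
    show "transpose_mat G * transpose_mat A * transpose_mat G = transpose_mat G"
      unfolding GAG using pen unfolding penrose_def by simp
    show "transpose_mat (transpose_mat A * transpose_mat G) = transpose_mat A * transpose_mat G"
      unfolding AG using pen unfolding penrose_def by simp
    show "transpose_mat (transpose_mat G * transpose_mat A) = transpose_mat G * transpose_mat A"
      unfolding GA using pen unfolding penrose_def by simp
  qed
qed

lemma penrose_left_eq:
  fixes A B C :: "real mat"
  assumes A: "A \<in> carrier_mat m n" and B: "B \<in> carrier_mat n m" and C: "C \<in> carrier_mat n m"
    and pen_B: "penrose A B" and pen_C: "penrose A C"
  shows "A * B = A * C"
proof -
  have ABA: "A * B * A = A" and ACA: "A * C * A = A"
    and AB: "transpose_mat (A * B) = A * B" and AC: "transpose_mat (A * C) = A * C"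
    using pen_B pen_C unfolding penrose_def by auto
  have absorb: "(A * G) * (A * H) = A * H"
    if AGA: "A * G * A = A" and G: "G \<in> carrier_mat n m" and H: "H \<in> carrier_mat n m" for G H
  proof -
    have "(A * G) * (A * H) = (A * G * A) * H"
      using carrier_matD[OF A] carrier_matD[OF G] carrier_matD[OF H] by (simp add: mult_mat_assoc_dims)
    then show ?thesis unfolding AGA .
  qed
  have "A * B = transpose_mat ((A * C) * (A * B))" unfolding absorb[OF ACA C B] AB ..
  also have "\<dots> = transpose_mat (A * B) * transpose_mat (A * C)"
    by (rule transpose_mult[OF mult_carrier_mat[OF A C] mult_carrier_mat[OF A B]])
  also have "\<dots> = A * C" unfolding AB AC by (rule absorb[OF ABA B C])
  finally show ?thesis .
qed

lemma penrose_unique: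
  fixes A B C :: "real mat"
  assumes A: "A \<in> carrier_mat m n" and B: "B \<in> carrier_mat n m" and C: "C \<in> carrier_mat n m"
    and pen_B: "penrose A B" and pen_C: "penrose A C"
  shows "B = C"
proof -
  have AB: "A * B = A * C" by (rule penrose_left_eq[OF A B C pen_B pen_C])
  have "transpose_mat A * transpose_mat B = transpose_mat A * transpose_mat C"
    using penrose_left_eq[of "transpose_mat A" n m "transpose_mat B" "transpose_mat C"]
      penrose_transpose[OF A B pen_B] penrose_transpose[OF A C pen_C] A B C by simp
  then have "transpose_mat (B * A) = transpose_mat (C * A)"
    using transpose_mult[OF B A] transpose_mult[OF C A] by simp
  from arg_cong[OF this, of transpose_mat] have BA: "B * A = C * A" by simp
  have "B = B * (A * B)" using pen_B A B unfolding penrose_def by simp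
  also have "\<dots> = B * A * C" unfolding AB using A B C by simp
  also have "\<dots> = C * A * C" unfolding BA ..
  also have "\<dots> = C" using pen_C unfolding penrose_def by simp
  finally show ?thesis .
qed

lemma pinv_penrose:
  fixes A :: "real mat"
  assumes A: "A \<in> carrier_mat m n"
  shows "pinv A \<in> carrier_mat n m" "penrose A (pinv A)"
proof -
  have "pinv A = (THE G. G \<in> carrier_mat n m \<and> penrose A G)"
    unfolding pinv_def penrose_def using A by simp
  moreover have "\<exists>!G. G \<in> carrier_mat n m \<and> penrose A G"
    using penrose_exists[OF A] penrose_unique[OF A] by blast
  ultimately have "pinv A \<in> carrier_mat n m \<and> penrose A (pinv A)"
    using theI'[of "\<lambda>G. G \<in> carrier_mat n m \<and> penrose A G"] by simp
  then show "pinv A \<in> carrier_mat n m" "penrose A (pinv A)" by auto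
qed

lemma orth_proj_mult_pinv:
  fixes A :: "real mat"
  assumes A: "A \<in> carrier_mat m n"
  shows "orth_proj (A * pinv A)"
proof -
  have G: "pinv A \<in> carrier_mat n m" and pen: "penrose A (pinv A)" using pinv_penrose[OF A] by auto
  have "A * pinv A * (A * pinv A) = A * pinv A * A * pinv A"
    using A G by (simp add: mult_mat_assoc_dims)
  then show ?thesis using pen unfolding orth_proj_def penrose_def by simp
qed

lemma mult_pinv_zero_col:
  fixes X W :: "real mat"
  assumes X: "X \<in> carrier_mat n p" and W: "W \<in> carrier_mat p q"
    and j: "j < p" and zero_row: "\<forall>l<q. W $$ (j,l) = 0" and i: "i < n"
  shows "(X * W * pinv W) $$ (i,j) = 0"
proof -
  define Q where "Q = W * pinv W"
  have H: "pinv W \<in> carrier_mat q p" using pinv_penrose[OF W] by simp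
  have Q: "Q \<in> carrier_mat p p" unfolding Q_def using W H by simp
  have Q_sym: "transpose_mat Q = Q"
    using pinv_penrose[OF W] unfolding Q_def penrose_def by simp
  have Q_col: "Q $$ (l,j) = 0" if l: "l < p" for l
  proof -
    have "Q $$ (l,j) = Q $$ (j,l)" using arg_cong[OF Q_sym, of "\<lambda>M. M $$ (j,l)"] Q j l by simp
    also have "\<dots> = row W j \<bullet> col (pinv W) l" unfolding Q_def using W H j l by simp
    also have "\<dots> = 0" using zero_row W H j unfolding scalar_prod_def by simp
    finally show ?thesis .
  qed
  have "X * W * pinv W = X * Q" unfolding Q_def using X W H by simp
  then show ?thesis using X Q i j Q_col by (simp add: scalar_prod_def)
qed

lemma mult_eq_if_cols_agree:
  fixes A B W :: "'a :: comm_semiring_0 mat"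
  assumes A: "A \<in> carrier_mat n p" and B: "B \<in> carrier_mat n p" and W: "W \<in> carrier_mat p q"
    and agree: "\<And>i k. i < n \<Longrightarrow> k \<in> K \<Longrightarrow> A $$ (i,k) = B $$ (i,k)"
    and zero_rows: "\<And>k j. k < p \<Longrightarrow> k \<notin> K \<Longrightarrow> j < q \<Longrightarrow> W $$ (k,j) = 0"
  shows "A * W = B * W"
proof (rule eq_matI)
  fix i j assume "i < dim_row (B * W)" "j < dim_col (B * W)"
  then have i: "i < n" and j: "j < q" using B W by auto
  have "A $$ (i,k) * W $$ (k,j) = B $$ (i,k) * W $$ (k,j)" if "k < p" for k
    using agree[OF i] zero_rows[OF that _ j] by (cases "k \<in> K") auto
  then show "(A * W) $$ (i,j) = (B * W) $$ (i,j)"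
    using A B W i j by (auto simp: scalar_prod_def intro!: sum.cong)
qed (use A B W in auto)

lemma orth_col_spaces_if_sym_absorbs:
  fixes P A B :: "real mat"
  assumes P: "P \<in> carrier_mat n n" "transpose_mat P = P"
    and A: "A \<in> carrier_mat n a" "P * A = A"
    and B: "B \<in> carrier_mat n b" "P * B = 0\<^sub>m n b"
  shows "orth_subspaces (col_space A) (col_space B)"
  unfolding orth_subspaces_def col_space_def
proof (intro ballI)
  fix u v
  assume "u \<in> {A *\<^sub>v x |x. x \<in> carrier_vec (dim_col A)}" "v \<in> {B *\<^sub>v x |x. x \<in> carrier_vec (dim_col B)}"
  then obtain x y where x: "x \<in> carrier_vec a" and u: "u = A *\<^sub>v x"
    and y: "y \<in> carrier_vec b" and v: "v = B *\<^sub>v y"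
    using A B by auto
  have uc: "u \<in> carrier_vec n" and vc: "v \<in> carrier_vec n" using u v x y A B by auto
  have Pu: "P *\<^sub>v u = u" using assoc_mult_mat_vec[OF P(1) A(1) x] A(2) u by simp
  have "P *\<^sub>v v = 0\<^sub>m n b *\<^sub>v y" using assoc_mult_mat_vec[OF P(1) B(1) y] B(2) v by simp
  also have "\<dots> = 0\<^sub>v n" using y by (intro eq_vecI) auto
  finally have Pv: "P *\<^sub>v v = 0\<^sub>v n" .
  have "u \<bullet> v = (transpose_mat P *\<^sub>v u) \<bullet> v" using P(2) Pu by simp
  also have "\<dots> = u \<bullet> (P *\<^sub>v v)" by (rule transpose_vec_mult_scalar[OF P(1) vc uc])
  finally show "u \<bullet> v = 0" using Pv uc by simp
qed

lemma cols_sub_dims: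
  assumes X: "X \<in> carrier_mat n p" and K: "K \<subseteq> {0..<p}"
  shows "card {i. i < dim_row X \<and> i \<in> UNIV} = n" and "{j. j < dim_col X \<and> j \<in> K} = K"
  using X K by auto

lemma cols_sub_carrier:
  assumes X: "X \<in> carrier_mat n p" and K: "K \<subseteq> {0..<p}"
  shows "cols_sub X K \<in> carrier_mat n (card K)"
  unfolding cols_sub_def carrier_mat_def mem_Collect_eq dim_submatrix cols_sub_dims[OF X K] by simp

lemma index_cols_sub:
  assumes X: "X \<in> carrier_mat n p" and K: "K \<subseteq> {0..<p}" and i: "i < n" and j: "j < card K"
  shows "cols_sub X K $$ (i,j) = X $$ (i, pick K j)"
proof -
  have "i < card {i. i < dim_row X \<and> i \<in> UNIV}" "j < card {j. j < dim_col X \<and> j \<in> K}"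
    unfolding cols_sub_dims[OF X K] using i j .
  then show ?thesis unfolding cols_sub_def by (simp only: submatrix_index pick_UNIV)
qed

lemma mult_cols_sub:
  assumes P: "P \<in> carrier_mat m n" and X: "X \<in> carrier_mat n p" and K: "K \<subseteq> {0..<p}"
  shows "P * cols_sub X K = cols_sub (P * X) K"
proof -
  have XK: "cols_sub X K \<in> carrier_mat n (card K)" by (rule cols_sub_carrier[OF X K])
  have PXK: "cols_sub (P * X) K \<in> carrier_mat m (card K)" using cols_sub_carrier[OF _ K] P X by simp
  have "(P * cols_sub X K) $$ (i,j) = cols_sub (P * X) K $$ (i,j)" if i: "i < m" and j: "j < card K" for i j
  proof -
    have pj: "pick K j < p" using pick_in_set_le[OF j] K by auto
    have "col (cols_sub X K) j = col X (pick K j)"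
      using XK X pj j by (intro eq_vecI) (auto simp: index_cols_sub[OF X K])
    then show ?thesis
      using P X XK i j pj index_cols_sub[of "P * X" m p K i j] K by simp
  qed
  then show ?thesis using P XK PXK by (intro eq_matI) auto
qed

lemma cols_sub_eqD:
  assumes A: "A \<in> carrier_mat n p" and B: "B \<in> carrier_mat n p"
    and eq: "cols_sub A K = cols_sub B K" and i: "i < n" and k: "k < p" "k \<in> K"
  shows "A $$ (i,k) = B $$ (i,k)"
proof -
  have idx: "cols_sub M K $$ (i, card {a\<in>K. a < k}) = M $$ (i,k)" if "M \<in> carrier_mat n p" for M
    using submatrix_index_card[of i M k UNIV K] that i k unfolding cols_sub_def by simp
  show ?thesis using idx[OF A] idx[OF B] unfolding eq by linarith
qed

lemma cols_sub_eq_0: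
  assumes A: "A \<in> carrier_mat n p" and K: "K \<subseteq> {0..<p}"
    and zero: "\<And>i k. i < n \<Longrightarrow> k \<in> K \<Longrightarrow> A $$ (i,k) = 0"
  shows "cols_sub A K = 0\<^sub>m n (card K)"
proof (rule eq_matI)
  fix i j assume "i < dim_row (0\<^sub>m n (card K))" "j < dim_col (0\<^sub>m n (card K))"
  then have i: "i < n" and j: "j < card K" by auto
  have "pick K j \<in> K" by (rule pick_in_set_le[OF j])
  then show "cols_sub A K $$ (i,j) = 0\<^sub>m n (card K) $$ (i,j)"
    using index_cols_sub[OF A K i j] zero[OF i] i j by simp
qed (use cols_sub_carrier[OF A K] in auto)

lemma frob_norm_nonneg: "frob_norm A \<ge> 0"
  unfolding frob_norm_def by (simp add: sum_nonneg)

lemma frob_norm_eq_0_iff: "frob_norm A = 0 \<longleftrightarrow> (\<forall>i<dim_row A. \<forall>j<dim_col A. A $$ (i,j) = 0)"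
  unfolding frob_norm_def by (auto simp: sum_nonneg sum_nonneg_eq_0_iff)

lemma frob_norm_minus_eq_0_iff:
  assumes "A \<in> carrier_mat n p" and "B \<in> carrier_mat n p"
  shows "frob_norm (A - B) = 0 \<longleftrightarrow> A = B"
  using assms by (auto simp: frob_norm_eq_0_iff intro!: eq_matI)

definition frob_inner :: "real mat \<Rightarrow> real mat \<Rightarrow> real" where
  "frob_inner A B = (\<Sum>i<dim_row A. \<Sum>j<dim_col A. A $$ (i,j) * B $$ (i,j))"

lemma frob_norm_add_sq:
  assumes A: "A \<in> carrier_mat n p" and B: "B \<in> carrier_mat n p"
  shows "frob_norm (A + B) ^ 2 = frob_norm A ^ 2 + frob_norm B ^ 2 + 2 * frob_inner A B"
proof -
  have sq: "frob_norm M ^ 2 = (\<Sum>i<dim_row M. \<Sum>j<dim_col M. (M $$ (i,j))^2)" for M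
    unfolding frob_norm_def by (simp add: sum_nonneg)
  show ?thesis
    unfolding sq frob_inner_def using A B
    by (simp add: power2_sum sum.distrib sum_distrib_left mult.assoc)
qed

lemma frob_inner_mult_right:
  assumes D: "D \<in> carrier_mat n p" and P: "P \<in> carrier_mat n m" and E: "E \<in> carrier_mat m p"
  shows "frob_inner D (P * E) = frob_inner (transpose_mat P * D) E"
proof -
  have "frob_inner D (P * E) = (\<Sum>i<n. \<Sum>j<p. \<Sum>k<m. D $$ (i,j) * P $$ (i,k) * E $$ (k,j))"
    unfolding frob_inner_def using D P E
    by (auto simp: scalar_prod_def sum_distrib_left lessThan_atLeast0 ac_simps intro!: sum.cong)
  also have "\<dots> = (\<Sum>k<m. \<Sum>j<p. \<Sum>i<n. D $$ (i,j) * P $$ (i,k) * E $$ (k,j))"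
    by (subst sum.swap, subst (2) sum.swap, subst sum.swap) (rule refl)
  also have "\<dots> = frob_inner (transpose_mat P * D) E"
    unfolding frob_inner_def using D P E
    by (auto simp: scalar_prod_def sum_distrib_left sum_distrib_right lessThan_atLeast0 ac_simps
        intro!: sum.cong)
  finally show ?thesis .
qed

lemma frob_norm_pythagoras:
  assumes P: "P \<in> carrier_mat n n" "orth_proj P" and E: "E \<in> carrier_mat n p"
  shows "frob_norm E ^ 2 = frob_norm (E - P * E) ^ 2 + frob_norm (P * E) ^ 2"
proof -
  have PE: "P * E \<in> carrier_mat n p" using P E by simp
  have P_sym: "transpose_mat P = P" and P_idem: "P * P = P" using P(2) unfolding orth_proj_def by auto
  have "P * (P * E) = P * P * E" by (rule assoc_mult_mat[OF P(1) P(1) E, symmetric])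
  then have PPE: "P * (P * E) = P * E" unfolding P_idem .
  have "transpose_mat P * (E - P * E) = P * E - P * (P * E)"
    unfolding P_sym by (rule mult_minus_distrib_mat[OF P(1) E PE])
  also have "\<dots> = 0\<^sub>m n p" unfolding PPE using PE by (auto intro!: eq_matI)
  finally have "frob_inner (E - P * E) (P * E) = 0"
    unfolding frob_inner_mult_right[OF minus_carrier_mat[OF PE] P(1) E] by (simp add: frob_inner_def)
  then have "frob_norm (E - P * E + P * E) ^ 2 = frob_norm (E - P * E) ^ 2 + frob_norm (P * E) ^ 2"
    using frob_norm_add_sq[OF minus_carrier_mat[OF PE] PE] by simp
  moreover have "E - P * E + P * E = E"
  proof (rule eq_matI)
    show "(E - P * E + P * E) $$ (i,j) = E $$ (i,j)" if "i < dim_row E" "j < dim_col E" for i j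
      using that carrier_matD[OF PE] carrier_matD[OF E] by simp
  qed (use carrier_matD[OF PE] carrier_matD[OF E] in simp_all)
  ultimately show ?thesis by simp
qed

lemma cols_proj_fixes_cols:
  fixes X :: "real mat"
  assumes X: "X \<in> carrier_mat n p" and I: "I \<subseteq> {0..<p}" and i: "i < n" and k: "k \<in> I"
  shows "(cols_sub X I * pinv (cols_sub X I) * X) $$ (i,k) = X $$ (i,k)"
proof -
  define XI where "XI = cols_sub X I"
  have XI: "XI \<in> carrier_mat n (card I)" unfolding XI_def by (rule cols_sub_carrier[OF X I])
  have P: "XI * pinv XI \<in> carrier_mat n n" using pinv_penrose[OF XI] XI by simp
  have "cols_sub (XI * pinv XI * X) I = XI * pinv XI * XI"
    using mult_cols_sub[OF P X I] unfolding XI_def by simp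
  also have "\<dots> = cols_sub X I" using pinv_penrose[OF XI] unfolding penrose_def XI_def by simp
  finally show ?thesis
    using cols_sub_eqD[of "XI * pinv XI * X" n p X I i k] P X I i k unfolding XI_def by auto
qed

lemma cols_proj_residual_split:
  fixes X W :: "real mat"
  assumes X: "X \<in> carrier_mat n p" and W: "W \<in> carrier_mat p q" and I: "I \<subseteq> {0..<p}"
    and W_rows: "\<And>k j. k < p \<Longrightarrow> k \<notin> I \<Longrightarrow> j < q \<Longrightarrow> W $$ (k,j) = 0"
  defines "P \<equiv> cols_sub X I * pinv (cols_sub X I)" and "Y \<equiv> X * W * pinv W"
  shows "frob_norm (X - Y) ^ 2 = frob_norm (X - P * X) ^ 2 + frob_norm (P * X - Y) ^ 2"
proof -
  have XI: "cols_sub X I \<in> carrier_mat n (card I)" by (rule cols_sub_carrier[OF X I])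
  have P: "P \<in> carrier_mat n n" "orth_proj P"
    using pinv_penrose[OF XI] orth_proj_mult_pinv[OF XI] XI unfolding P_def by auto
  have H: "pinv W \<in> carrier_mat q p" using pinv_penrose[OF W] by simp
  have Y: "Y \<in> carrier_mat n p" unfolding Y_def using X W H by simp
  have PXW: "P * X * W = X * W"
  proof (rule mult_eq_if_cols_agree[OF _ X W])
    show "P * X \<in> carrier_mat n p" using P X by simp
    show "(P * X) $$ (i,k) = X $$ (i,k)" if "i < n" "k \<in> I" for i k
      using cols_proj_fixes_cols[OF X I that] unfolding P_def .
  qed (rule W_rows)
  have "P * Y = P * X * W * pinv W"
    unfolding Y_def using carrier_matD[OF P(1)] carrier_matD[OF X] carrier_matD[OF W] carrier_matD[OF H]
    by (simp add: mult_mat_assoc_dims)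
  then have PY: "P * Y = Y" unfolding PXW Y_def .
  have "P * (X - Y) = P * X - Y" using mult_minus_distrib_mat[OF P(1) X Y] PY by simp
  moreover have "X - Y - (P * X - Y) = X - P * X"
  proof (rule eq_matI)
    have PX: "P * X \<in> carrier_mat n p" using P X by simp
    show "(X - Y - (P * X - Y)) $$ (i,j) = (X - P * X) $$ (i,j)"
      if "i < dim_row (X - P * X)" "j < dim_col (X - P * X)" for i j
      using that carrier_matD[OF PX] carrier_matD[OF X] carrier_matD[OF Y] by simp
  qed (use carrier_matD[OF P(1)] carrier_matD[OF X] carrier_matD[OF Y] in simp_all)
  ultimately show ?thesis using frob_norm_pythagoras[OF P minus_carrier_mat[OF Y, of X]] by simp
qed

lemma orth_col_spaces_if_cols_proj_eq:
  fixes X W :: "real mat"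
  assumes X: "X \<in> carrier_mat n p" and W: "W \<in> carrier_mat p q" and I: "I \<subseteq> {0..<p}"
    and W_rows: "\<And>k j. k < p \<Longrightarrow> k \<notin> I \<Longrightarrow> j < q \<Longrightarrow> W $$ (k,j) = 0"
    and eq: "cols_sub X I * pinv (cols_sub X I) * X = X * W * pinv W"
  shows "orth_subspaces (col_space (cols_sub X I)) (col_space (cols_sub X ({0..<p} - I)))"
proof -
  define J where "J = {0..<p} - I"
  define P where "P = cols_sub X I * pinv (cols_sub X I)"
  have J: "J \<subseteq> {0..<p}" unfolding J_def by auto
  have XI: "cols_sub X I \<in> carrier_mat n (card I)" by (rule cols_sub_carrier[OF X I])
  have P: "P \<in> carrier_mat n n" "transpose_mat P = P" "P * cols_sub X I = cols_sub X I"
    using pinv_penrose[OF XI] XI unfolding P_def penrose_def by auto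
  have H: "pinv W \<in> carrier_mat q p" using pinv_penrose[OF W] by simp
  have "P * cols_sub X J = cols_sub (X * W * pinv W) J"
    using mult_cols_sub[OF P(1) X J] eq unfolding P_def by simp
  also have "\<dots> = 0\<^sub>m n (card J)"
    using cols_sub_eq_0[OF _ J] mult_pinv_zero_col[OF X W] W_rows X W H unfolding J_def by auto
  finally show ?thesis
    using orth_col_spaces_if_sym_absorbs[OF P(1,2) XI P(3) cols_sub_carrier[OF X J]]
    unfolding J_def by simp
qed

theorem theorem3:
  fixes X W :: "real mat" and n p :: nat and I :: "nat set"
  assumes X: "X \<in> carrier_mat n p"
    and W: "W \<in> carrier_mat p p"
    and I: "I \<subseteq> {0..<p}"
    and W_rows: "\<forall>i<p. i \<notin> I \<longrightarrow> (\<forall>j<p. W $$ (i,j) = 0)"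
  shows "(\<not> orth_subspaces (col_space (cols_sub X I)) (col_space (cols_sub X ({0..<p} - I))) \<longrightarrow>
            frob_norm (X - X * W * pinv W) > frob_norm (X - cols_sub X I * pinv (cols_sub X I) * X))
       \<and> (orth_subspaces (col_space (cols_sub X I)) (col_space (cols_sub X ({0..<p} - I))) \<longrightarrow>
            frob_norm (X - X * W * pinv W) \<ge> frob_norm (X - cols_sub X I * pinv (cols_sub X I) * X))"
proof -
  let ?PX = "cols_sub X I * pinv (cols_sub X I) * X" and ?Y = "X * W * pinv W"
  have rows: "\<And>k j. k < p \<Longrightarrow> k \<notin> I \<Longrightarrow> j < p \<Longrightarrow> W $$ (k,j) = 0" using W_rows by blast
  note split = cols_proj_residual_split[OF X W I rows]
  have ge: "frob_norm (X - ?PX) \<le> frob_norm (X - ?Y)"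
    by (rule power2_le_imp_le) (simp_all add: split frob_norm_nonneg)
  have gt: "frob_norm (X - ?PX) < frob_norm (X - ?Y)" if "?PX \<noteq> ?Y"
  proof (rule power_less_imp_less_base[of _ 2])
    have XI: "cols_sub X I \<in> carrier_mat n (card I)" by (rule cols_sub_carrier[OF X I])
    have "?PX \<in> carrier_mat n p" "?Y \<in> carrier_mat n p"
      using pinv_penrose[OF XI] pinv_penrose[OF W] XI X W by auto
    then have "frob_norm (?PX - ?Y) \<noteq> 0" using frob_norm_minus_eq_0_iff that by blast
    then show "frob_norm (X - ?PX) ^ 2 < frob_norm (X - ?Y) ^ 2" by (simp add: split)
  qed (rule frob_norm_nonneg)
  show ?thesis
    using ge gt orth_col_spaces_if_cols_proj_eq[OF X W I rows] by auto
qed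

end
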